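(* For integers $g\ge 0$ and $h,m\ge 1$, let $S^0_{gh}(K_m)$ be the graph obtained from the complete graph $K_m$ by attaching, at one vertex $u$, two pendant paths of lengths $g$ and $h$ that are disjoint except at $u$. Then \[ X_{S_{gh}^0(K_m)}=(m-1)!\Bigg(\sum_{z=0}^{m-1}e_z\,X_{P_{g+h+m-z}}-\sum_{z=1}^{m-1}\frac{X_{K_z^h}}{(z-1)!}\,X_{P_{g+m-z}}\Bigg). \]
   Context: All graphs are finite simple graphs. The chromatic symmetric function of a graph $G$ is $X_G=\sum_{\kappa}\prod_{v\in V(G)}x_{\kappa(v)}$, where $\kappa$ ranges over proper colorings $\kappa:V(G)\to\{1,2,\dots\}$; $e_z$ is the $z$-th elementary symmetric function, $e_0=1$. $P_j$ is the path on $j$ vertices. $K_z^h$ is the lollipop: the complete graph $K_z$ with a pendant path of length $h$ (with $h$ new vertices) attached at one vertex. *)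

theory Defs
  imports Complex_Main "HOL-Library.Poly_Mapping" "HOL-Library.FuncSet"
begin

text \<open>Formal power series in the countably many variables x_0, x_1, ... with rational
coefficients: a series is its coefficient function on monomials (exponent vectors,
finitely supported functions nat to nat).\<close>

type_synonym sfun = "(nat \<Rightarrow>\<^sub>0 nat) \<Rightarrow> rat"

definition sf_mult :: "sfun \<Rightarrow> sfun \<Rightarrow> sfun" where
  "sf_mult f g = (\<lambda>\<alpha>. \<Sum>(\<beta>, \<gamma>) \<in> {(\<beta>, \<gamma>). \<beta> + \<gamma> = \<alpha>}. f \<beta> * g \<gamma>)"

definition proper_colorings :: "'a set \<Rightarrow> ('a \<Rightarrow> 'a \<Rightarrow> bool) \<Rightarrow> ('a \<Rightarrow> nat) set" where
  "proper_colorings V E = {\<kappa> \<in> V \<rightarrow>\<^sub>E UNIV. \<forall>u\<in>V. \<forall>v\<in>V. E u v \<longrightarrow> \<kappa> u \<noteq> \<kappa> v}"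

definition chrom_sym :: "'a set \<Rightarrow> ('a \<Rightarrow> 'a \<Rightarrow> bool) \<Rightarrow> sfun" where
  "chrom_sym V E = (\<lambda>\<alpha>. of_nat (card {\<kappa> \<in> proper_colorings V E.
        \<forall>i. card {v \<in> V. \<kappa> v = i} = Poly_Mapping.lookup \<alpha> i}))"

definition elem_sym :: "nat \<Rightarrow> sfun" where
  "elem_sym z = (\<lambda>\<alpha>. if (\<forall>i. Poly_Mapping.lookup \<alpha> i \<le> 1) \<and> (\<Sum>i\<in>Poly_Mapping.keys \<alpha>. Poly_Mapping.lookup \<alpha> i) = z then 1 else 0)"

definition path_V :: "nat \<Rightarrow> nat set" where "path_V j = {0..<j}"
definition path_E :: "nat \<Rightarrow> nat \<Rightarrow> bool" where "path_E u v \<longleftrightarrow> u + 1 = v \<or> v + 1 = u"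

text \<open>Lollipop K_z^h: path 0,1,...,h (length h) and the clique K_z on {0} \<union> {h+1..<h+z}.\<close>
definition lollipop_V :: "nat \<Rightarrow> nat \<Rightarrow> nat set" where "lollipop_V z h = {0..<h+z}"
definition lollipop_E :: "nat \<Rightarrow> nat \<Rightarrow> nat \<Rightarrow> nat \<Rightarrow> bool" where
  "lollipop_E z h u v \<longleftrightarrow>
     ((u \<le> h \<and> v \<le> h \<and> (u + 1 = v \<or> v + 1 = u)) \<or>
      (u \<in> insert 0 {h+1..<h+z} \<and> v \<in> insert 0 {h+1..<h+z} \<and> u \<noteq> v))"

text \<open>S^0_{gh}(K_m): path 0,1,...,g+h with u = g, the clique K_m on {g} \<union> {g+h+1..<g+h+m}.
So the pendant paths at u are g,g-1,...,0 (length g) and g,g+1,...,g+h (length h).\<close>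
definition spider_V :: "nat \<Rightarrow> nat \<Rightarrow> nat \<Rightarrow> nat set" where
  "spider_V g h m = {0..<g+h+m}"
definition spider_E :: "nat \<Rightarrow> nat \<Rightarrow> nat \<Rightarrow> nat \<Rightarrow> nat \<Rightarrow> bool" where
  "spider_E g h m u v \<longleftrightarrow>
     ((u \<le> g+h \<and> v \<le> g+h \<and> (u + 1 = v \<or> v + 1 = u)) \<or>
      (u \<in> insert g {g+h+1..<g+h+m} \<and> v \<in> insert g {g+h+1..<g+h+m} \<and> u \<noteq> v))"

end

(*
  A proper colouring of S^0_{gh}(K_m) is a proper colouring of the path P_{g+h+1} through u = g
  together with an injective colouring of the other m - 1 clique vertices avoiding the colour of u.
  Forgetting the order of these m - 1 colours gives X_S = (m-1)! R_g(m-1), where R_g(k) enumerates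
  pairs (colouring of P_{g+h+1}, k-set of colours avoiding the colour of vertex g), weighted by all
  colours used; likewise X_{K_z^h} = (z-1)! R'(z-1), rooted at an end of P_{h+1}.

  Split e_{k+1} X_{P_{g+h+1}} according to whether the colour of u lies in the (k+1)-set, and split
  R'(k) X_{P_{g+1}} according to whether the two paths end in the same colour (glue them at that
  vertex, or join them by an edge). Both splittings produce the same pairs with the colour of u
  counted twice, so R_g(k+1) = e_{k+1} X_{P_{g+h+1}} - R'(k) X_{P_{g+1}} + R_{g+1}(k), and unrolling
  this recurrence gives the formula.
*)

theory Submission
  imports Defs "HOL-Combinatorics.Multiset_Permutations"
begin

definition monomial_of_list :: "nat list \<Rightarrow> (nat \<Rightarrow>\<^sub>0 nat)" where
  "monomial_of_list xs = (\<Sum>c\<leftarrow>xs. Poly_Mapping.single c 1)"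

definition monomial_of_set :: "nat set \<Rightarrow> (nat \<Rightarrow>\<^sub>0 nat)" where
  "monomial_of_set C = (\<Sum>c\<in>C. Poly_Mapping.single c 1)"

lemma monomial_of_list_simps [simp]:
  "monomial_of_list [] = 0"
  "monomial_of_list (c # xs) = Poly_Mapping.single c 1 + monomial_of_list xs"
  "monomial_of_list (xs @ ys) = monomial_of_list xs + monomial_of_list ys"
  by (simp_all add: monomial_of_list_def)

lemma keys_add_nat: "Poly_Mapping.keys (p + q) = Poly_Mapping.keys p \<union> Poly_Mapping.keys (q :: 'a \<Rightarrow>\<^sub>0 nat)"
  by (auto simp: in_keys_iff lookup_add)

lemma keys_monomial_of_list [simp]: "Poly_Mapping.keys (monomial_of_list xs) = set xs"
  by (induction xs) (simp_all add: keys_add_nat)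

lemma lookup_monomial_of_set:
  "finite C \<Longrightarrow> Poly_Mapping.lookup (monomial_of_set C) i = (if i \<in> C then 1 else 0)"
  by (simp add: monomial_of_set_def lookup_sum lookup_single when_def)

lemma keys_monomial_of_set [simp]: "finite C \<Longrightarrow> Poly_Mapping.keys (monomial_of_set C) = C"
  by (simp add: in_keys_iff lookup_monomial_of_set set_eq_iff)

lemma monomial_of_set_remove:
  "finite C \<Longrightarrow> c \<in> C \<Longrightarrow>
     monomial_of_set C = monomial_of_set (C - {c}) + Poly_Mapping.single c 1"
  by (simp add: monomial_of_set_def sum.remove add.commute)

lemma monomial_of_list_distinct:
  "distinct xs \<Longrightarrow> monomial_of_list xs = monomial_of_set (set xs)"
  by (simp add: monomial_of_list_def monomial_of_set_def sum_list_distinct_conv_sum_set)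

lemma finite_decompositions: "finite {(\<beta>, \<gamma>). \<beta> + \<gamma> = (\<alpha> :: nat \<Rightarrow>\<^sub>0 nat)}"
proof -
  let ?K = "Poly_Mapping.keys \<alpha>"
  define B where "B = {\<beta>. \<exists>\<gamma>. \<beta> + \<gamma> = \<alpha>}"
  define r where "r = (\<lambda>\<beta> :: nat \<Rightarrow>\<^sub>0 nat. restrict (Poly_Mapping.lookup \<beta>) ?K)"
  have below: "Poly_Mapping.lookup \<beta> i \<le> Poly_Mapping.lookup \<alpha> i" if "\<beta> \<in> B" for \<beta> i
    using that by (auto simp: B_def lookup_add)
  have "inj_on r B"
  proof (rule inj_onI)
    fix \<beta> \<beta>' assume "\<beta> \<in> B" "\<beta>' \<in> B" and eq: "r \<beta> = r \<beta>'"
    show "\<beta> = \<beta>'"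
    proof (rule poly_mapping_eqI)
      fix i
      show "Poly_Mapping.lookup \<beta> i = Poly_Mapping.lookup \<beta>' i"
      proof (cases "i \<in> ?K")
        case True
        then show ?thesis using fun_cong[OF eq, of i] by (simp add: r_def)
      next
        case False
        then show ?thesis using below[OF \<open>\<beta> \<in> B\<close>, of i] below[OF \<open>\<beta>' \<in> B\<close>, of i]
          by (simp add: in_keys_iff)
      qed
    qed
  qed
  moreover have "r ` B \<subseteq> (\<Pi>\<^sub>E i\<in>?K. {0..Poly_Mapping.lookup \<alpha> i})"
    using below by (auto simp: r_def)
  ultimately have "finite B"
    using finite_subset finite_imageD by (metis finite_PiE finite_atLeastAtMost finite_keys)
  moreover have "{(\<beta>, \<gamma>). \<beta> + \<gamma> = \<alpha>} \<subseteq> (\<lambda>\<beta>. (\<beta>, \<alpha> - \<beta>)) ` B"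
    by (auto simp: B_def image_iff)
  ultimately show ?thesis by (meson finite_imageI finite_subset)
qed

lemma sf_mult_scale_left: "sf_mult (\<lambda>\<beta>. c * f \<beta>) g \<alpha> = c * sf_mult f g \<alpha>"
  by (simp add: sf_mult_def sum_distrib_left case_prod_unfold mult.assoc)

lemma sf_mult_commute: "sf_mult f g = sf_mult g f"
  unfolding sf_mult_def
  by (intro ext sum.reindex_bij_witness[of _ prod.swap prod.swap]) (auto simp: add.commute mult.commute)

section \<open>Generating functions of weighted sets\<close>

definition gen_fun :: "'x set \<Rightarrow> ('x \<Rightarrow> (nat \<Rightarrow>\<^sub>0 nat)) \<Rightarrow> sfun" where
  "gen_fun S w = (\<lambda>\<alpha>. of_nat (card {x \<in> S. w x = \<alpha>}))"

definition finite_fibres :: "'x set \<Rightarrow> ('x \<Rightarrow> 'b) \<Rightarrow> bool" where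
  "finite_fibres S w \<longleftrightarrow> (\<forall>\<alpha>. finite {x \<in> S. w x = \<alpha>})"

lemma finite_fibres_subset:
  assumes "finite_fibres S w" "T \<subseteq> S"
  shows "finite_fibres T w"
  unfolding finite_fibres_def
proof
  fix \<alpha>
  have "{x \<in> T. w x = \<alpha>} \<subseteq> {x \<in> S. w x = \<alpha>}"
    using assms(2) by blast
  then show "finite {x \<in> T. w x = \<alpha>}"
    using assms(1) finite_subset unfolding finite_fibres_def by blast
qed

lemma fibre_Times:
  "{p \<in> A \<times> B. (\<lambda>(a, b). wa a + wb b) p = \<alpha>} =
     (\<Union>(\<beta>, \<gamma>)\<in>{(\<beta>, \<gamma>). \<beta> + \<gamma> = \<alpha>}. {a \<in> A. wa a = \<beta>} \<times> {b \<in> B. wb b = \<gamma>})"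
  by auto

lemma finite_fibres_Times:
  assumes "finite_fibres A wa" "finite_fibres B (wb :: _ \<Rightarrow> nat \<Rightarrow>\<^sub>0 nat)"
  shows "finite_fibres (A \<times> B) (\<lambda>(a, b). wa a + wb b)"
  using assms unfolding finite_fibres_def fibre_Times by (auto intro!: finite_decompositions)

lemma finite_fibres_lists_length: "finite_fibres {xs. length xs = n} monomial_of_list"
  unfolding finite_fibres_def
proof
  fix \<alpha>
  have "{xs \<in> {xs. length xs = n}. monomial_of_list xs = \<alpha>} \<subseteq> {xs. set xs \<subseteq> Poly_Mapping.keys \<alpha> \<and> length xs = n}"
    by auto
  then show "finite {xs \<in> {xs. length xs = n}. monomial_of_list xs = \<alpha>}"
    by (rule finite_subset) (simp add: finite_lists_length_eq)
qed

lemma finite_fibres_finite_sets: "finite_fibres {C. finite C} monomial_of_set"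
  unfolding finite_fibres_def
proof
  fix \<alpha>
  have "{C \<in> {C. finite C}. monomial_of_set C = \<alpha>} \<subseteq> {Poly_Mapping.keys \<alpha>}"
    by auto
  then show "finite {C \<in> {C. finite C}. monomial_of_set C = \<alpha>}"
    by (rule finite_subset) simp
qed

lemma sf_mult_gen_fun:
  assumes "finite_fibres A wa" "finite_fibres B wb"
  shows "sf_mult (gen_fun A wa) (gen_fun B wb) = gen_fun (A \<times> B) (\<lambda>(a, b). wa a + wb b)"
proof (rule ext)
  fix \<alpha>
  let ?F = "\<lambda>(\<beta>, \<gamma>). {a \<in> A. wa a = \<beta>} \<times> {b \<in> B. wb b = \<gamma>}"
  have "card (\<Union>d\<in>{(\<beta>, \<gamma>). \<beta> + \<gamma> = \<alpha>}. ?F d) = (\<Sum>d\<in>{(\<beta>, \<gamma>). \<beta> + \<gamma> = \<alpha>}. card (?F d))"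
    using assms unfolding finite_fibres_def
    by (intro card_UN_disjoint finite_decompositions) auto
  then show "sf_mult (gen_fun A wa) (gen_fun B wb) \<alpha> = gen_fun (A \<times> B) (\<lambda>(a, b). wa a + wb b) \<alpha>"
    unfolding sf_mult_def gen_fun_def fibre_Times
    by (simp add: case_prod_unfold card_cartesian_product)
qed

lemma gen_fun_bij_betw:
  assumes "bij_betw f S T" and "\<And>x. x \<in> S \<Longrightarrow> w' (f x) = w x"
  shows "gen_fun T w' = gen_fun S w"
proof (rule ext)
  fix \<alpha>
  have img: "f ` {x \<in> S. w x = \<alpha>} = {y \<in> T. w' y = \<alpha>}"
    using assms by (auto simp: bij_betw_def)
  have "bij_betw f {x \<in> S. w x = \<alpha>} {y \<in> T. w' y = \<alpha>}"
    by (rule bij_betw_subset[OF assms(1) _ img]) blast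
  then show "gen_fun T w' \<alpha> = gen_fun S w \<alpha>"
    unfolding gen_fun_def by (simp add: bij_betw_same_card)
qed

lemma gen_fun_split:
  assumes "finite_fibres S w"
  shows "gen_fun S w \<alpha> = gen_fun {x \<in> S. P x} w \<alpha> + gen_fun {x \<in> S. \<not> P x} w \<alpha>"
proof -
  let ?F = "\<lambda>S'. {x \<in> S'. w x = \<alpha>}"
  have fin: "finite (?F S)"
    using assms unfolding finite_fibres_def by blast
  have "?F S = ?F {x \<in> S. P x} \<union> ?F {x \<in> S. \<not> P x}"
    by blast
  moreover have "card (?F {x \<in> S. P x} \<union> ?F {x \<in> S. \<not> P x}) =
      card (?F {x \<in> S. P x}) + card (?F {x \<in> S. \<not> P x})"
    by (rule card_Un_disjoint) (auto intro: rev_finite_subset[OF fin])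
  ultimately show ?thesis
    unfolding gen_fun_def by simp
qed

lemma gen_fun_distinct_lists:
  assumes fib: "finite_fibres Q w" and card: "\<And>y C. (y, C) \<in> Q \<Longrightarrow> finite C \<and> card C = k"
  shows "gen_fun {(y, zs). distinct zs \<and> (y, set zs) \<in> Q} (\<lambda>(y, zs). w (y, set zs)) \<alpha> =
           of_nat (fact k) * gen_fun Q w \<alpha>"
proof -
  let ?Q\<alpha> = "{q \<in> Q. w q = \<alpha>}"
  let ?\<Sigma> = "SIGMA q:?Q\<alpha>. permutations_of_set (snd q)"
  let ?f = "\<lambda>((y, C), zs). (y, zs)"
  have inj: "inj_on ?f ?\<Sigma>"
    by (rule inj_onI) (clarsimp simp: permutations_of_set_def)
  have img: "?f ` ?\<Sigma> = {p \<in> {(y, zs). distinct zs \<and> (y, set zs) \<in> Q}. (\<lambda>(y, zs). w (y, set zs)) p = \<alpha>}"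
    (is "_ = ?L")
  proof (intro equalityI subsetI)
    fix p assume "p \<in> ?f ` ?\<Sigma>"
    then obtain y C zs where "p = (y, zs)" "(y, C) \<in> Q" "w (y, C) = \<alpha>" "zs \<in> permutations_of_set C"
      by auto
    then show "p \<in> ?L"
      by (simp add: permutations_of_set_def)
  next
    fix p assume p: "p \<in> ?L"
    obtain y zs where p_eq: "p = (y, zs)"
      by (cases p)
    have "((y, set zs), zs) \<in> ?\<Sigma>"
      using p by (simp add: p_eq permutations_of_set_def)
    then show "p \<in> ?f ` ?\<Sigma>"
      unfolding p_eq by (rule rev_image_eqI) simp
  qed
  have "card ?L = card ?\<Sigma>"
    using card_image[OF inj] img by simp
  also have "\<dots> = (\<Sum>q\<in>?Q\<alpha>. card (permutations_of_set (snd q)))"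
    using fib unfolding finite_fibres_def by (intro card_SigmaI) simp_all
  also have "\<dots> = (\<Sum>q\<in>?Q\<alpha>. fact k)"
    using card by (intro sum.cong refl) (metis (no_types, lifting) card_permutations_of_set mem_Collect_eq prod.collapse)
  finally have "card ?L = fact k * card ?Q\<alpha>"
    by simp
  then show ?thesis
    unfolding gen_fun_def by simp
qed

section \<open>Colourings of graphs on an interval as lists\<close>

lemma chrom_sym_eq_gen_fun:
  assumes "finite V"
  shows "chrom_sym V E = gen_fun (proper_colorings V E) (\<lambda>\<kappa>. \<Sum>v\<in>V. Poly_Mapping.single (\<kappa> v) 1)"
proof -
  have lookup: "Poly_Mapping.lookup (\<Sum>v\<in>V. Poly_Mapping.single (\<kappa> v) 1) i = card {v \<in> V. \<kappa> v = i}" for \<kappa> i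
    using assms by (simp add: lookup_sum lookup_single when_def sum.If_cases Int_def conj_commute)
  have colour_count: "(\<forall>i. card {v \<in> V. \<kappa> v = i} = Poly_Mapping.lookup \<alpha> i) \<longleftrightarrow>
      (\<Sum>v\<in>V. Poly_Mapping.single (\<kappa> v) 1) = \<alpha>" for \<kappa> \<alpha>
    by (simp only: poly_mapping_eq_iff fun_eq_iff lookup)
  show ?thesis
    unfolding chrom_sym_def gen_fun_def colour_count ..
qed

definition list_colourings :: "nat \<Rightarrow> (nat \<Rightarrow> nat \<Rightarrow> bool) \<Rightarrow> nat list set" where
  "list_colourings n E = {xs. length xs = n \<and> (\<forall>i<n. \<forall>j<n. E i j \<longrightarrow> xs ! i \<noteq> xs ! j)}"

lemma bij_betw_list_colourings:
  "bij_betw (\<lambda>\<kappa>. map \<kappa> [0..<n]) (proper_colorings {0..<n} E) (list_colourings n E)"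
proof (rule bij_betw_byWitness[where f' = "\<lambda>xs i. if i < n then xs ! i else undefined"])
  show "\<forall>\<kappa>\<in>proper_colorings {0..<n} E. (\<lambda>i. if i < n then map \<kappa> [0..<n] ! i else undefined) = \<kappa>"
  proof
    fix \<kappa> assume "\<kappa> \<in> proper_colorings {0..<n} E"
    then have \<kappa>: "\<kappa> \<in> {0..<n} \<rightarrow>\<^sub>E UNIV"
      unfolding proper_colorings_def by blast
    show "(\<lambda>i. if i < n then map \<kappa> [0..<n] ! i else undefined) = \<kappa>"
    proof (rule ext)
      fix i
      show "(if i < n then map \<kappa> [0..<n] ! i else undefined) = \<kappa> i"
        using PiE_arb[OF \<kappa>, of i] by simp
    qed
  qed
  show "\<forall>xs\<in>list_colourings n E. map (\<lambda>i. if i < n then xs ! i else undefined) [0..<n] = xs"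
  proof
    fix xs assume "xs \<in> list_colourings n E"
    then have "length xs = n"
      by (simp add: list_colourings_def)
    then show "map (\<lambda>i. if i < n then xs ! i else undefined) [0..<n] = xs"
      by (intro nth_equalityI) auto
  qed
  show "(\<lambda>\<kappa>. map \<kappa> [0..<n]) ` proper_colorings {0..<n} E \<subseteq> list_colourings n E"
  proof (rule image_subsetI)
    fix \<kappa> assume "\<kappa> \<in> proper_colorings {0..<n} E"
    then have "\<forall>i<n. \<forall>j<n. E i j \<longrightarrow> \<kappa> i \<noteq> \<kappa> j"
      by (simp add: proper_colorings_def)
    then show "map \<kappa> [0..<n] \<in> list_colourings n E"
      by (simp add: list_colourings_def)
  qed
  show "(\<lambda>xs i. if i < n then xs ! i else undefined) ` list_colourings n E \<subseteq> proper_colorings {0..<n} E"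
  proof (rule image_subsetI)
    fix xs assume "xs \<in> list_colourings n E"
    then have "\<forall>i<n. \<forall>j<n. E i j \<longrightarrow> xs ! i \<noteq> xs ! j"
      by (simp add: list_colourings_def)
    moreover have "(\<lambda>i. if i < n then xs ! i else undefined) \<in> {0..<n} \<rightarrow>\<^sub>E UNIV"
      by (simp add: PiE_iff extensional_def)
    ultimately show "(\<lambda>i. if i < n then xs ! i else undefined) \<in> proper_colorings {0..<n} E"
      by (simp add: proper_colorings_def)
  qed
qed

lemma chrom_sym_atLeastLessThan:
  "chrom_sym {0..<n} E = gen_fun (list_colourings n E) monomial_of_list"
proof -
  have mono: "monomial_of_list (map \<kappa> [0..<n]) = (\<Sum>v\<in>{0..<n}. Poly_Mapping.single (\<kappa> v) 1)" for \<kappa>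
    by (simp add: monomial_of_list_def sum_list_distinct_conv_sum_set comp_def)
  have "chrom_sym {0..<n} E = gen_fun (proper_colorings {0..<n} E) (\<lambda>\<kappa>. \<Sum>v\<in>{0..<n}. Poly_Mapping.single (\<kappa> v) 1)"
    by (rule chrom_sym_eq_gen_fun) simp
  also have "\<dots> = gen_fun (list_colourings n E) monomial_of_list"
    by (rule gen_fun_bij_betw[OF bij_betw_list_colourings, symmetric]) (rule mono)
  finally show ?thesis .
qed

definition path_colourings :: "nat \<Rightarrow> nat list set" where
  "path_colourings n = {xs. length xs = n \<and> successively (\<noteq>) xs}"

lemma list_colourings_path: "list_colourings n path_E = path_colourings n"
proof -
  have "(\<forall>i<n. \<forall>j<n. (i + 1 = j \<or> j + 1 = i) \<longrightarrow> xs ! i \<noteq> xs ! j) \<longleftrightarrow>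
        (\<forall>i. Suc i < n \<longrightarrow> xs ! i \<noteq> xs ! Suc i)" for xs :: "nat list"
    by (metis Suc_eq_plus1 Suc_lessD)
  then show ?thesis
    by (auto simp: list_colourings_def path_colourings_def path_E_def successively_conv_nth)
qed

lemma chrom_sym_path: "chrom_sym (path_V n) path_E = gen_fun (path_colourings n) monomial_of_list"
  by (simp add: path_V_def chrom_sym_atLeastLessThan list_colourings_path)

lemma finite_fibres_path_colourings: "finite_fibres (path_colourings n) monomial_of_list"
  by (rule finite_fibres_subset[OF finite_fibres_lists_length[of n]]) (auto simp: path_colourings_def)

lemma elem_sym_eq_gen_fun: "elem_sym k = gen_fun {C. finite C \<and> card C = k} monomial_of_set"
proof (rule ext)
  fix \<alpha> :: "nat \<Rightarrow>\<^sub>0 nat"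
  let ?K = "Poly_Mapping.keys \<alpha>"
  let ?sq = "(\<forall>i. Poly_Mapping.lookup \<alpha> i \<le> 1) \<and> (\<Sum>i\<in>?K. Poly_Mapping.lookup \<alpha> i) = k"
  have "finite C \<and> card C = k \<and> monomial_of_set C = \<alpha> \<longleftrightarrow> C = ?K \<and> ?sq" for C
  proof
    assume C: "finite C \<and> card C = k \<and> monomial_of_set C = \<alpha>"
    then have "Poly_Mapping.lookup \<alpha> i = (if i \<in> C then 1 else 0)" for i
      by (auto simp: lookup_monomial_of_set)
    moreover have "C = ?K"
      using C by auto
    ultimately show "C = ?K \<and> ?sq"
      using C by simp
  next
    assume K: "C = ?K \<and> ?sq"
    then have one: "Poly_Mapping.lookup \<alpha> i = 1" if "i \<in> ?K" for i
      using that by (metis in_keys_iff le_antisym less_one not_le)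
    have "monomial_of_set ?K = \<alpha>"
      by (rule poly_mapping_eqI) (auto simp: lookup_monomial_of_set one in_keys_iff)
    moreover have "(\<Sum>i\<in>?K. Poly_Mapping.lookup \<alpha> i) = (\<Sum>i\<in>?K. 1)"
      by (rule sum.cong) (simp_all add: one)
    ultimately show "finite C \<and> card C = k \<and> monomial_of_set C = \<alpha>"
      using K by simp
  qed
  then have "{C \<in> {C. finite C \<and> card C = k}. monomial_of_set C = \<alpha>} = (if ?sq then {?K} else {})"
    by auto
  then show "elem_sym k \<alpha> = gen_fun {C. finite C \<and> card C = k} monomial_of_set \<alpha>"
    unfolding elem_sym_def gen_fun_def by simp
qed

section \<open>A clique attached to a path\<close>

definition pair_weight :: "nat list \<times> nat set \<Rightarrow> (nat \<Rightarrow>\<^sub>0 nat)" where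
  "pair_weight = (\<lambda>(xs, C). monomial_of_list xs + monomial_of_set C)"

(* A colouring xs of P_n together with the colour set C of k further vertices forming a clique
   with vertex u. *)
definition rooted_pairs :: "nat \<Rightarrow> nat \<Rightarrow> nat \<Rightarrow> (nat list \<times> nat set) set" where
  "rooted_pairs n u k = {(xs, C). xs \<in> path_colourings n \<and> finite C \<and> card C = k \<and> xs ! u \<notin> C}"

lemma finite_fibres_rooted_pairs: "finite_fibres (rooted_pairs n u k) pair_weight"
  unfolding pair_weight_def
  by (rule finite_fibres_subset[OF finite_fibres_Times[OF finite_fibres_path_colourings finite_fibres_finite_sets]])
    (auto simp: rooted_pairs_def)

(* P_n with a clique on u and the new vertices n, ..., n + k - 1; both S^0_{gh}(K_m) and K_z^h
   are of this form. *)
definition clique_path_E :: "nat \<Rightarrow> nat \<Rightarrow> nat \<Rightarrow> nat \<Rightarrow> nat \<Rightarrow> bool" where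
  "clique_path_E n u k i j \<longleftrightarrow>
     (i < n \<and> j < n \<and> path_E i j) \<or> (i \<in> insert u {n..<n+k} \<and> j \<in> insert u {n..<n+k} \<and> i \<noteq> j)"

lemma inj_on_nth_root_append:
  assumes "u < length ys"
  shows "inj_on ((!) (ys @ zs)) (insert u {length ys..<length ys + length zs}) \<longleftrightarrow> distinct (ys ! u # zs)"
proof -
  let ?xs = "ys @ zs" and ?n = "length ys" and ?k = "length zs"
  have "map ((!) ?xs) [?n..<?n+?k] = zs"
    by (rule nth_equalityI) (simp_all add: nth_append)
  moreover have "?xs ! u = ys ! u"
    using assms by (simp add: nth_append)
  ultimately have "map ((!) ?xs) (u # [?n..<?n+?k]) = ys ! u # zs"
    by simp
  moreover have "distinct (u # [?n..<?n+?k])" and "set (u # [?n..<?n+?k]) = insert u {?n..<?n+?k}"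
    using assms by auto
  ultimately show ?thesis
    by (metis distinct_map)
qed

lemma list_colourings_clique_path:
  assumes "u < n" and ys: "length ys = n" and zs: "length zs = k"
  shows "ys @ zs \<in> list_colourings (n + k) (clique_path_E n u k) \<longleftrightarrow>
           ys \<in> path_colourings n \<and> distinct (ys ! u # zs)"
proof -
  let ?xs = "ys @ zs" and ?S = "insert u {n..<n+k}"
  have S_bound: "i < n + k" if "i \<in> ?S" for i
    using that \<open>u < n\<close> by auto
  have edges: "(\<forall>i<n+k. \<forall>j<n+k. clique_path_E n u k i j \<longrightarrow> R i j) \<longleftrightarrow>
      (\<forall>i<n. \<forall>j<n. path_E i j \<longrightarrow> R i j) \<and> (\<forall>i\<in>?S. \<forall>j\<in>?S. i \<noteq> j \<longrightarrow> R i j)" for R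
  proof
    assume all: "\<forall>i<n+k. \<forall>j<n+k. clique_path_E n u k i j \<longrightarrow> R i j"
    show "(\<forall>i<n. \<forall>j<n. path_E i j \<longrightarrow> R i j) \<and> (\<forall>i\<in>?S. \<forall>j\<in>?S. i \<noteq> j \<longrightarrow> R i j)"
    proof (intro conjI allI impI ballI)
      fix i j assume "i < n" "j < n" "path_E i j"
      then show "R i j"
        by (intro all[rule_format]) (simp_all add: clique_path_E_def)
    next
      fix i j assume "i \<in> ?S" "j \<in> ?S" "i \<noteq> j"
      with S_bound show "R i j"
        by (intro all[rule_format]) (simp_all add: clique_path_E_def)
    qed
  qed (auto simp: clique_path_E_def)
  have path: "(\<forall>i<n. \<forall>j<n. path_E i j \<longrightarrow> ?xs ! i \<noteq> ?xs ! j) \<longleftrightarrow> ys \<in> path_colourings n"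
    using ys by (simp add: list_colourings_path[symmetric] list_colourings_def nth_append)
  have clique: "(\<forall>i\<in>?S. \<forall>j\<in>?S. i \<noteq> j \<longrightarrow> ?xs ! i \<noteq> ?xs ! j) \<longleftrightarrow> distinct (ys ! u # zs)"
    using inj_on_nth_root_append[of u ys zs] assms unfolding inj_on_def by auto
  show ?thesis
    unfolding list_colourings_def mem_Collect_eq edges path clique using ys zs by simp
qed

lemma bij_betw_append_clique:
  assumes "u < n"
  shows "bij_betw (\<lambda>(ys, zs). ys @ zs) {(ys, zs). distinct zs \<and> (ys, set zs) \<in> rooted_pairs n u k}
           (list_colourings (n + k) (clique_path_E n u k))"
    (is "bij_betw _ ?L _")
proof (rule bij_betw_byWitness[where f' = "\<lambda>xs. (take n xs, drop n xs)"])
  have L_iff: "(ys, zs) \<in> ?L \<longleftrightarrow>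
      length ys = n \<and> length zs = k \<and> ys \<in> path_colourings n \<and> distinct (ys ! u # zs)" for ys zs
    by (auto simp: rooted_pairs_def path_colourings_def distinct_card)
  show "\<forall>p\<in>?L. (take n (case p of (ys, zs) \<Rightarrow> ys @ zs), drop n (case p of (ys, zs) \<Rightarrow> ys @ zs)) = p"
    using L_iff by auto
  show "\<forall>xs\<in>list_colourings (n + k) (clique_path_E n u k). (case (take n xs, drop n xs) of (ys, zs) \<Rightarrow> ys @ zs) = xs"
    by simp
  show "(\<lambda>(ys, zs). ys @ zs) ` ?L \<subseteq> list_colourings (n + k) (clique_path_E n u k)"
    using L_iff list_colourings_clique_path[OF assms] by auto
  show "(\<lambda>xs. (take n xs, drop n xs)) ` list_colourings (n + k) (clique_path_E n u k) \<subseteq> ?L"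
  proof (rule image_subsetI)
    fix xs assume xs: "xs \<in> list_colourings (n + k) (clique_path_E n u k)"
    then have "length xs = n + k"
      by (simp add: list_colourings_def)
    then show "(take n xs, drop n xs) \<in> ?L"
      using xs list_colourings_clique_path[OF assms, of "take n xs" "drop n xs"] L_iff by simp
  qed
qed

lemma chrom_sym_clique_path:
  assumes "u < n"
  shows "chrom_sym {0..<n+k} (clique_path_E n u k) \<alpha> =
           of_nat (fact k) * gen_fun (rooted_pairs n u k) pair_weight \<alpha>"
proof -
  let ?L = "{(ys, zs). distinct zs \<and> (ys, set zs) \<in> rooted_pairs n u k}"
  have "gen_fun (list_colourings (n + k) (clique_path_E n u k)) monomial_of_list =
      gen_fun ?L (\<lambda>(ys, zs). pair_weight (ys, set zs))"
    by (rule gen_fun_bij_betw[OF bij_betw_append_clique[OF assms]])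
      (auto simp: pair_weight_def monomial_of_list_distinct)
  moreover have "gen_fun ?L (\<lambda>(ys, zs). pair_weight (ys, set zs)) \<alpha> =
      of_nat (fact k) * gen_fun (rooted_pairs n u k) pair_weight \<alpha>"
    by (rule gen_fun_distinct_lists[OF finite_fibres_rooted_pairs]) (simp add: rooted_pairs_def)
  ultimately show ?thesis
    by (simp add: chrom_sym_atLeastLessThan)
qed

lemma chrom_sym_spider:
  assumes "m \<ge> 1"
  shows "chrom_sym (spider_V g h m) (spider_E g h m) \<alpha> =
           of_nat (fact (m - 1)) * gen_fun (rooted_pairs (g + h + 1) g (m - 1)) pair_weight \<alpha>"
proof -
  have "spider_V g h m = {0..<(g + h + 1) + (m - 1)}"
    using assms by (simp add: spider_V_def)
  moreover have "spider_E g h m = clique_path_E (g + h + 1) g (m - 1)"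
    using assms by (auto simp: fun_eq_iff spider_E_def clique_path_E_def path_E_def)
  ultimately show ?thesis
    using chrom_sym_clique_path[of g "g + h + 1"] by simp
qed

lemma chrom_sym_lollipop:
  assumes "z \<ge> 1"
  shows "chrom_sym (lollipop_V z h) (lollipop_E z h) =
           (\<lambda>\<alpha>. of_nat (fact (z - 1)) * gen_fun (rooted_pairs (h + 1) 0 (z - 1)) pair_weight \<alpha>)"
proof -
  have "lollipop_V z h = {0..<(h + 1) + (z - 1)}"
    using assms by (simp add: lollipop_V_def)
  moreover have "lollipop_E z h = clique_path_E (h + 1) 0 (z - 1)"
    using assms by (auto simp: fun_eq_iff lollipop_E_def clique_path_E_def path_E_def)
  ultimately show ?thesis
    using chrom_sym_clique_path[of 0 "h + 1"] by auto
qed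

section \<open>The recurrence\<close>

definition doubled_root_weight :: "nat \<Rightarrow> nat list \<times> nat set \<Rightarrow> (nat \<Rightarrow>\<^sub>0 nat)" where
  "doubled_root_weight u = (\<lambda>(xs, C). pair_weight (xs, C) + Poly_Mapping.single (xs ! u) 1)"

lemma sf_mult_elem_sym_path:
  "sf_mult (elem_sym k) (chrom_sym (path_V n) path_E) =
     gen_fun (path_colourings n \<times> {C. finite C \<and> card C = k}) pair_weight"
proof -
  have fib: "finite_fibres {C. finite C \<and> card C = k} monomial_of_set"
    by (rule finite_fibres_subset[OF finite_fibres_finite_sets]) auto
  have "sf_mult (elem_sym k) (chrom_sym (path_V n) path_E) =
      sf_mult (gen_fun (path_colourings n) monomial_of_list) (gen_fun {C. finite C \<and> card C = k} monomial_of_set)"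
    unfolding elem_sym_eq_gen_fun chrom_sym_path by (rule sf_mult_commute)
  also have "\<dots> = gen_fun (path_colourings n \<times> {C. finite C \<and> card C = k}) pair_weight"
    unfolding pair_weight_def by (rule sf_mult_gen_fun[OF finite_fibres_path_colourings fib])
  finally show ?thesis .
qed

lemma finite_fibres_path_sets:
  "finite_fibres (path_colourings n \<times> {C. finite C \<and> card C = k}) pair_weight"
  unfolding pair_weight_def
  by (rule finite_fibres_subset[OF finite_fibres_Times[OF finite_fibres_path_colourings finite_fibres_finite_sets]])
    auto

lemma sf_mult_elem_sym_0_path:
  "sf_mult (elem_sym 0) (chrom_sym (path_V n) path_E) \<alpha> = gen_fun (rooted_pairs n u 0) pair_weight \<alpha>"
proof -
  have "path_colourings n \<times> {C. finite C \<and> card C = 0} = rooted_pairs n u 0"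
    by (auto simp: rooted_pairs_def)
  then show ?thesis
    by (simp add: sf_mult_elem_sym_path)
qed

lemma sf_mult_elem_sym_Suc_path:
  "sf_mult (elem_sym (Suc k)) (chrom_sym (path_V n) path_E) \<alpha> =
     gen_fun (rooted_pairs n u (Suc k)) pair_weight \<alpha> + gen_fun (rooted_pairs n u k) (doubled_root_weight u) \<alpha>"
proof -
  let ?S = "path_colourings n \<times> {C. finite C \<and> card C = Suc k}"
  have "{p \<in> ?S. \<not> (\<lambda>(xs, C). xs ! u \<in> C) p} = rooted_pairs n u (Suc k)"
    by (auto simp: rooted_pairs_def)
  moreover have "bij_betw (\<lambda>(xs, C). (xs, C - {xs ! u})) {p \<in> ?S. (\<lambda>(xs, C). xs ! u \<in> C) p} (rooted_pairs n u k)"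
    by (rule bij_betw_byWitness[where f' = "\<lambda>(xs, C). (xs, insert (xs ! u) C)"])
      (auto simp: rooted_pairs_def insert_absorb card_insert_if)
  then have "gen_fun (rooted_pairs n u k) (doubled_root_weight u) = gen_fun {p \<in> ?S. (\<lambda>(xs, C). xs ! u \<in> C) p} pair_weight"
  proof (rule gen_fun_bij_betw)
    fix p assume "p \<in> {p \<in> ?S. (\<lambda>(xs, C). xs ! u \<in> C) p}"
    then obtain xs C where p: "p = (xs, C)" and "finite C" "xs ! u \<in> C"
      by auto
    then show "doubled_root_weight u ((\<lambda>(xs, C). (xs, C - {xs ! u})) p) = pair_weight p"
      using monomial_of_set_remove[of C "xs ! u"]
      by (simp add: doubled_root_weight_def pair_weight_def add.assoc)
  qed
  ultimately show ?thesis
    using gen_fun_split[OF finite_fibres_path_sets, where \<alpha> = \<alpha> and P = "\<lambda>(xs, C). xs ! u \<in> C"]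
    by (simp add: sf_mult_elem_sym_path add.commute)
qed

lemma successively_glue:
  assumes "ys \<noteq> []" "zs \<noteq> []" "last ys = hd zs"
  shows "successively (\<noteq>) (ys @ tl zs) \<longleftrightarrow> successively (\<noteq>) ys \<and> successively (\<noteq>) zs"
  using assms by (cases zs) (auto simp: successively_append_iff successively_Cons)

lemma take_drop_glue:
  assumes "length ys = Suc g" "zs \<noteq> []" "last ys = hd zs"
  shows "take (Suc g) (ys @ tl zs) = ys" and "drop g (ys @ tl zs) = zs" and "(ys @ tl zs) ! g = hd zs"
proof -
  have "ys \<noteq> []"
    using assms(1) by auto
  then have "drop g ys = [hd zs]"
    using assms Cons_nth_drop_Suc[of g ys] by (simp add: last_conv_nth)
  then show "take (Suc g) (ys @ tl zs) = ys" and "drop g (ys @ tl zs) = zs" and "(ys @ tl zs) ! g = hd zs"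
    using assms by (simp_all add: nth_append hd_drop_conv_nth[symmetric])
qed

lemma glue_take_drop: "take (Suc g) xs @ tl (drop g xs) = xs"
  by (simp add: tl_drop flip: drop_Suc)

lemma glued_in_rooted_pairs:
  assumes "length ys = Suc g" "zs \<noteq> []" "last ys = hd zs"
  shows "(ys @ tl zs, C) \<in> rooted_pairs (g + h + 1) g k \<longleftrightarrow>
           (zs, C) \<in> rooted_pairs (h + 1) 0 k \<and> ys \<in> path_colourings (Suc g)"
proof -
  have "length (ys @ tl zs) = g + h + 1 \<longleftrightarrow> length zs = h + 1"
    using assms by (cases zs) auto
  moreover have "ys \<noteq> []"
    using assms(1) by auto
  ultimately show ?thesis
    using assms take_drop_glue(3)[OF assms]
    by (auto simp: rooted_pairs_def path_colourings_def successively_glue hd_conv_nth)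
qed

lemma appended_in_rooted_pairs:
  assumes "length ys = Suc g"
  shows "(ys @ zs, C) \<in> rooted_pairs (Suc g + h + 1) (Suc g) k \<longleftrightarrow>
           (zs, C) \<in> rooted_pairs (h + 1) 0 k \<and> ys \<in> path_colourings (Suc g) \<and> last ys \<noteq> hd zs"
proof (cases "zs = []")
  case True
  then show ?thesis
    using assms by (simp add: rooted_pairs_def path_colourings_def)
next
  case False
  moreover have "ys \<noteq> []"
    using assms by auto
  ultimately show ?thesis
    using assms by (auto simp: rooted_pairs_def path_colourings_def successively_append_iff nth_append hd_conv_nth)
qed

lemma bij_betw_glue:
  "bij_betw (\<lambda>((zs, C), ys). (ys @ tl zs, C))
     {((zs, C), ys). (zs, C) \<in> rooted_pairs (h + 1) 0 k \<and> ys \<in> path_colourings (Suc g) \<and> last ys = hd zs}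
     (rooted_pairs (g + h + 1) g k)"
    (is "bij_betw ?f ?G _")
proof (rule bij_betw_byWitness[where f' = "\<lambda>(xs, C). ((drop g xs, C), take (Suc g) xs)"])
  have member: "length ys = Suc g \<and> zs \<noteq> [] \<and> last ys = hd zs" if "((zs, C), ys) \<in> ?G" for zs C ys
    using that by (auto simp: rooted_pairs_def path_colourings_def)
  show "\<forall>p\<in>?G. (\<lambda>(xs, C). ((drop g xs, C), take (Suc g) xs)) (?f p) = p"
    using member take_drop_glue by fastforce
  show "\<forall>q\<in>rooted_pairs (g + h + 1) g k. ?f ((\<lambda>(xs, C). ((drop g xs, C), take (Suc g) xs)) q) = q"
    by (auto simp: glue_take_drop)
  show "?f ` ?G \<subseteq> rooted_pairs (g + h + 1) g k"
    using member glued_in_rooted_pairs by fastforce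
  show "(\<lambda>(xs, C). ((drop g xs, C), take (Suc g) xs)) ` rooted_pairs (g + h + 1) g k \<subseteq> ?G"
  proof (rule image_subsetI)
    fix q assume q: "q \<in> rooted_pairs (g + h + 1) g k"
    obtain xs C where q_eq: "q = (xs, C)" and "length xs = g + h + 1"
      using q by (auto simp: rooted_pairs_def path_colourings_def)
    then have "length (take (Suc g) xs) = Suc g" "drop g xs \<noteq> []" "last (take (Suc g) xs) = hd (drop g xs)"
      by (simp_all add: take_Suc_conv_app_nth hd_drop_conv_nth)
    with q show "(\<lambda>(xs, C). ((drop g xs, C), take (Suc g) xs)) q \<in> ?G"
      using glued_in_rooted_pairs[of "take (Suc g) xs" g "drop g xs" C h k] by (simp add: q_eq glue_take_drop)
  qed
qed

lemma bij_betw_append: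
  "bij_betw (\<lambda>((zs, C), ys). (ys @ zs, C))
     {((zs, C), ys). (zs, C) \<in> rooted_pairs (h + 1) 0 k \<and> ys \<in> path_colourings (Suc g) \<and> last ys \<noteq> hd zs}
     (rooted_pairs (Suc g + h + 1) (Suc g) k)"
    (is "bij_betw ?f ?A _")
proof (rule bij_betw_byWitness[where f' = "\<lambda>(xs, C). ((drop (Suc g) xs, C), take (Suc g) xs)"])
  have member: "length ys = Suc g" if "((zs, C), ys) \<in> ?A" for zs C ys
    using that by (auto simp: path_colourings_def)
  show "\<forall>p\<in>?A. (\<lambda>(xs, C). ((drop (Suc g) xs, C), take (Suc g) xs)) (?f p) = p"
    using member by fastforce
  show "\<forall>q\<in>rooted_pairs (Suc g + h + 1) (Suc g) k. ?f ((\<lambda>(xs, C). ((drop (Suc g) xs, C), take (Suc g) xs)) q) = q"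
    by auto
  show "?f ` ?A \<subseteq> rooted_pairs (Suc g + h + 1) (Suc g) k"
    using member appended_in_rooted_pairs by fastforce
  show "(\<lambda>(xs, C). ((drop (Suc g) xs, C), take (Suc g) xs)) ` rooted_pairs (Suc g + h + 1) (Suc g) k \<subseteq> ?A"
  proof (rule image_subsetI)
    fix q assume q: "q \<in> rooted_pairs (Suc g + h + 1) (Suc g) k"
    obtain xs C where q_eq: "q = (xs, C)" and "length xs = Suc g + h + 1"
      using q by (auto simp: rooted_pairs_def path_colourings_def)
    then have "length (take (Suc g) xs) = Suc g"
      by simp
    with q show "(\<lambda>(xs, C). ((drop (Suc g) xs, C), take (Suc g) xs)) q \<in> ?A"
      using appended_in_rooted_pairs[of "take (Suc g) xs" g "drop (Suc g) xs" C h k] by (simp add: q_eq)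
  qed
qed

lemma sf_mult_rooted_pairs_path:
  "sf_mult (gen_fun (rooted_pairs (h + 1) 0 k) pair_weight) (chrom_sym (path_V (Suc g)) path_E) \<alpha> =
     gen_fun (rooted_pairs (g + h + 1) g k) (doubled_root_weight g) \<alpha> +
     gen_fun (rooted_pairs (Suc g + h + 1) (Suc g) k) pair_weight \<alpha>"
proof -
  let ?S = "rooted_pairs (h + 1) 0 k \<times> path_colourings (Suc g)"
  let ?w = "\<lambda>(r, ys). pair_weight r + monomial_of_list ys"
  let ?glued = "\<lambda>((zs, C), ys). last ys = hd zs"
  have glued_set: "{p \<in> ?S. ?glued p} =
      {((zs, C), ys). (zs, C) \<in> rooted_pairs (h + 1) 0 k \<and> ys \<in> path_colourings (Suc g) \<and> last ys = hd zs}"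
    by auto
  have appended_set: "{p \<in> ?S. \<not> ?glued p} =
      {((zs, C), ys). (zs, C) \<in> rooted_pairs (h + 1) 0 k \<and> ys \<in> path_colourings (Suc g) \<and> last ys \<noteq> hd zs}"
    by auto
  have glued: "gen_fun (rooted_pairs (g + h + 1) g k) (doubled_root_weight g) = gen_fun {p \<in> ?S. ?glued p} ?w"
    unfolding glued_set
  proof (rule gen_fun_bij_betw[OF bij_betw_glue])
    fix p
    assume "p \<in> {((zs, C), ys). (zs, C) \<in> rooted_pairs (h + 1) 0 k \<and> ys \<in> path_colourings (Suc g) \<and> last ys = hd zs}"
    then obtain zs C ys where p: "p = ((zs, C), ys)" and ys: "length ys = Suc g"
      and zs: "length zs = Suc h" and glue: "last ys = hd zs"
      by (auto simp: rooted_pairs_def path_colourings_def)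
    then have "zs \<noteq> []"
      by auto
    then have "monomial_of_list zs = Poly_Mapping.single (hd zs) 1 + monomial_of_list (tl zs)"
      by (cases zs) simp_all
    then show "doubled_root_weight g ((\<lambda>((zs, C), ys). (ys @ tl zs, C)) p) = ?w p"
      using take_drop_glue(3)[OF ys \<open>zs \<noteq> []\<close> glue] p
      by (simp add: doubled_root_weight_def pair_weight_def ac_simps)
  qed
  have appended: "gen_fun (rooted_pairs (Suc g + h + 1) (Suc g) k) pair_weight = gen_fun {p \<in> ?S. \<not> ?glued p} ?w"
    unfolding appended_set
    by (rule gen_fun_bij_betw[OF bij_betw_append]) (auto simp: pair_weight_def ac_simps)
  have "sf_mult (gen_fun (rooted_pairs (h + 1) 0 k) pair_weight) (chrom_sym (path_V (Suc g)) path_E) = gen_fun ?S ?w"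
    unfolding chrom_sym_path
    by (rule sf_mult_gen_fun[OF finite_fibres_rooted_pairs finite_fibres_path_colourings])
  moreover have "finite_fibres ?S ?w"
    by (rule finite_fibres_Times[OF finite_fibres_rooted_pairs finite_fibres_path_colourings])
  ultimately show ?thesis
    unfolding glued appended by (simp add: gen_fun_split)
qed

lemma rooted_pairs_unroll:
  "gen_fun (rooted_pairs (g + h + 1) g k) pair_weight \<alpha> =
     (\<Sum>z = 0..k. sf_mult (elem_sym z) (chrom_sym (path_V (g + h + 1 + k - z)) path_E) \<alpha>) -
     (\<Sum>z = 1..k. sf_mult (gen_fun (rooted_pairs (h + 1) 0 (z - 1)) pair_weight)
                    (chrom_sym (path_V (g + 1 + k - z)) path_E) \<alpha>)"
proof (induction k arbitrary: g)
  case 0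
  show ?case
    by (simp add: sf_mult_elem_sym_0_path[where u = g])
next
  case (Suc k)
  have "gen_fun (rooted_pairs (g + h + 1) g (Suc k)) pair_weight \<alpha> =
      sf_mult (elem_sym (Suc k)) (chrom_sym (path_V (g + h + 1)) path_E) \<alpha>
      - sf_mult (gen_fun (rooted_pairs (h + 1) 0 k) pair_weight) (chrom_sym (path_V (Suc g)) path_E) \<alpha>
      + gen_fun (rooted_pairs (Suc g + h + 1) (Suc g) k) pair_weight \<alpha>"
    using sf_mult_elem_sym_Suc_path[where n = "g + h + 1" and u = g and k = k and \<alpha> = \<alpha>]
      sf_mult_rooted_pairs_path[of h k g \<alpha>]
    by simp
  also have "\<dots> = (\<Sum>z = 0..Suc k. sf_mult (elem_sym z) (chrom_sym (path_V (g + h + 1 + Suc k - z)) path_E) \<alpha>) -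
     (\<Sum>z = 1..Suc k. sf_mult (gen_fun (rooted_pairs (h + 1) 0 (z - 1)) pair_weight)
                    (chrom_sym (path_V (g + 1 + Suc k - z)) path_E) \<alpha>)"
    using Suc.IH[of "Suc g"] by (simp add: sum.atLeast0_atMost_Suc sum.cl_ivl_Suc)
  finally show ?case .
qed

theorem corollary4p7:
  fixes g h m :: nat
  assumes "h \<ge> 1" and "m \<ge> 1"
  shows "\<forall>\<alpha>. chrom_sym (spider_V g h m) (spider_E g h m) \<alpha> =
    of_nat (fact (m - 1)) *
      ((\<Sum>z = 0..m-1. sf_mult (elem_sym z) (chrom_sym (path_V (g+h+m-z)) path_E) \<alpha>)
     - (\<Sum>z = 1..m-1. (1 / of_nat (fact (z - 1))) *
          sf_mult (chrom_sym (lollipop_V z h) (lollipop_E z h)) (chrom_sym (path_V (g+m-z)) path_E) \<alpha>))"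
proof
  fix \<alpha>
  have lollipop_term: "(1 / of_nat (fact (z - 1))) *
      sf_mult (chrom_sym (lollipop_V z h) (lollipop_E z h)) (chrom_sym (path_V (g+m-z)) path_E) \<alpha> =
      sf_mult (gen_fun (rooted_pairs (h + 1) 0 (z - 1)) pair_weight)
        (chrom_sym (path_V (g + 1 + (m - 1) - z)) path_E) \<alpha>" if "z \<in> {1..m-1}" for z
    using that \<open>m \<ge> 1\<close> by (simp add: chrom_sym_lollipop sf_mult_scale_left)
  have lollipop: "(\<Sum>z = 1..m-1. (1 / of_nat (fact (z - 1))) *
          sf_mult (chrom_sym (lollipop_V z h) (lollipop_E z h)) (chrom_sym (path_V (g+m-z)) path_E) \<alpha>) =
      (\<Sum>z = 1..m-1. sf_mult (gen_fun (rooted_pairs (h + 1) 0 (z - 1)) pair_weight)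
        (chrom_sym (path_V (g + 1 + (m - 1) - z)) path_E) \<alpha>)"
    by (rule sum.cong[OF refl lollipop_term])
  have elem: "sf_mult (elem_sym z) (chrom_sym (path_V (g+h+m-z)) path_E) \<alpha> =
      sf_mult (elem_sym z) (chrom_sym (path_V (g + h + 1 + (m - 1) - z)) path_E) \<alpha>" for z
    using \<open>m \<ge> 1\<close> by simp
  show "chrom_sym (spider_V g h m) (spider_E g h m) \<alpha> = of_nat (fact (m - 1)) *
      ((\<Sum>z = 0..m-1. sf_mult (elem_sym z) (chrom_sym (path_V (g+h+m-z)) path_E) \<alpha>)
     - (\<Sum>z = 1..m-1. (1 / of_nat (fact (z - 1))) *
          sf_mult (chrom_sym (lollipop_V z h) (lollipop_E z h)) (chrom_sym (path_V (g+m-z)) path_E) \<alpha>))"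
    unfolding chrom_sym_spider[OF \<open>m \<ge> 1\<close>] rooted_pairs_unroll elem lollipop ..
qed

end
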